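(* Assume (A1). For every constant $p>0$ there exists $u_0>0$ such that the integral equation \[ g(u)=\frac{\mu}{u^\gamma e^{-\alpha/u}}\int_0^u t^{\gamma-2}e^{-\alpha/t}\Big(p\,\bar F(t)+\int_0^t g(z)\bar F(t-z)\,dz\Big)dt,\qquad 0<u\le u_0, \] has a unique solution $g\in C([0,u_0])$, and this solution satisfies $g(0)=\lambda p/c$.
   Context: $F$ is the distribution function of a positive random variable (claim size), $\bar F=1-F$. Parameters: $\kappa\in(0,1]$, $a\in\mathbb{R}$, $r\ge0$, $\sigma>0$, $c>0$, $\lambda>0$, and $\gamma=\dfrac{2((a-r)\kappa+r)}{\kappa^2\sigma^2}$, $\alpha=\dfrac{2c}{\kappa^2\sigma^2}$, $\mu=\dfrac{2\lambda}{\kappa^2\sigma^2}$. Assumption (A1): $F(0)=0$. The value $g(0)$ of a continuous $g$ on $[0,u_0]$ is its limit as $u\downarrow0$. *)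

theory Defs
  imports "HOL-Probability.Probability"
begin

text \<open>The integral equation of the statement, on (0,u0], for a candidate g.
  Integrals are Henstock-Kurzweil integrals over [0,u] resp. [0,t];
  integrability of the outer integrand is required explicitly.\<close>

definition solves_ie ::
  "(real \<Rightarrow> real) \<Rightarrow> real \<Rightarrow> real \<Rightarrow> real \<Rightarrow> real
   \<Rightarrow> real \<Rightarrow> (real \<Rightarrow> real) \<Rightarrow> bool" where
  "solves_ie F \<gamma> \<alpha> \<mu> p u0 g \<longleftrightarrow>
     (\<forall>u\<in>{0<..u0}.
        (\<lambda>t. t powr (\<gamma> - 2) * exp (- \<alpha> / t) *
              (p * (1 - F t) + integral {0..t} (\<lambda>z. g z * (1 - F (t - z)))))
          integrable_on {0..u} \<and>
        g u = \<mu> / (u powr \<gamma> * exp (- \<alpha> / u)) *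
              integral {0..u} (\<lambda>t. t powr (\<gamma> - 2) * exp (- \<alpha> / t) *
                 (p * (1 - F t) + integral {0..t} (\<lambda>z. g z * (1 - F (t - z))))))"

end

theory Submission
  imports Defs "HOL-Real_Asymp.Real_Asymp"
begin

text \<open>With \<open>w t = t powr (\<gamma> - 2) * exp (- \<alpha> / t)\<close> and \<open>W u = u powr \<gamma> * exp (- \<alpha> / u)\<close> one has
  \<open>W' = w * (\<alpha> + \<gamma> t)\<close>. Hence \<open>\<integral>\<^sub>0\<^sup>u w \<le> 2 W u / \<alpha>\<close> for small \<open>u\<close>, so that \<open>\<mu> / W u * \<integral>\<^sub>0\<^sup>u h\<close> is at
  most \<open>2 \<mu> K / \<alpha>\<close> whenever \<open>\<bar>h\<bar> \<le> K w\<close>. As \<open>\<mu> / W u * \<integral>\<^sub>0\<^sup>u p w (\<alpha> + \<gamma> t) / \<alpha> = \<mu> p / \<alpha>\<close> exactly, this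
  shows that the right-hand side of the equation tends to \<open>\<mu> p / \<alpha>\<close> as \<open>u \<rightarrow> 0\<close> (this is where
  \<open>F (0+) = 0\<close> enters) and that it is Lipschitz in \<open>g\<close> with constant \<open>2 \<mu> u\<^sub>0 / \<alpha>\<close> for the sup norm
  on \<open>[0, u\<^sub>0]\<close>. Extended by \<open>\<mu> p / \<alpha>\<close> at \<open>0\<close>, it is therefore a contraction of \<open>C([0, u\<^sub>0])\<close> for
  small \<open>u\<^sub>0\<close>; its unique fixed point is the solution, and \<open>\<mu> p / \<alpha> = \<lambda> p / c\<close>.\<close>

lemma continuous_on_Icc_0I:
  fixes f :: "real \<Rightarrow> 'a::topological_space"
  assumes "continuous_on {0<..b} f" and "(f \<longlongrightarrow> f 0) (at_right 0)"
  shows "continuous_on {0..b} f"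
proof -
  have "continuous (at x within {0..b}) f" if x: "x \<in> {0..b}" for x
  proof (cases "x = 0")
    case True
    have "at 0 within {0..b} \<le> at_right (0::real)"
      unfolding at_within_def by (intro inf_mono) auto
    then show ?thesis using True assms(2) by (simp add: continuous_within tendsto_mono)
  next
    case False
    then have "at x within {0..b} = at x within {0<..b}"
      using x by (intro at_within_nhd[of _ "{0<..}"]) auto
    moreover have "continuous (at x within {0<..b}) f"
      using assms(1) x False by (simp add: continuous_on_eq_continuous_within)
    ultimately show ?thesis by simp
  qed
  then show ?thesis by (simp add: continuous_on_eq_continuous_within)
qed

lemma borel_measurable_apply_bcontfun:
  fixes G :: "'a::topological_space \<Rightarrow>\<^sub>C 'b::metric_space"
  shows "apply_bcontfun G \<in> borel_measurable borel"
  by (rule borel_measurable_continuous_onI) simp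

lemma borel_measurable_lebesgue_onI:
  "g \<in> borel_measurable borel \<Longrightarrow> g \<in> borel_measurable (lebesgue_on S)"
  using measurable_compose[OF id_borel_measurable_lebesgue_on] by (simp add: id_def)

text \<open>Banach's theorem is applied in the complete space of bounded continuous functions on \<open>\<real>\<close>,
  into which \<open>C([a, b])\<close> embeds by extending functions constantly outside \<open>[a, b]\<close>.\<close>

lemma ex_unique_continuous_fixed_point_Icc:
  fixes T :: "(real \<Rightarrow> real) \<Rightarrow> real \<Rightarrow> real"
  assumes "a \<le> b" "0 \<le> c" "c < 1"
    and T_cont: "\<And>f. continuous_on {a..b} f \<Longrightarrow> continuous_on {a..b} (T f)"
    and T_lipschitz: "\<And>f g D u. continuous_on {a..b} f \<Longrightarrow> continuous_on {a..b} g \<Longrightarrow>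
          \<forall>z\<in>{a..b}. \<bar>f z - g z\<bar> \<le> D \<Longrightarrow> u \<in> {a..b} \<Longrightarrow> \<bar>T f u - T g u\<bar> \<le> c * D"
  shows "\<exists>g. continuous_on {a..b} g \<and> (\<forall>u\<in>{a..b}. T g u = g u) \<and>
           (\<forall>h. continuous_on {a..b} h \<and> (\<forall>u\<in>{a..b}. T h u = h u) \<longrightarrow> (\<forall>u\<in>{a..b}. h u = g u))"
proof -
  have clamp_in: "clamp a b x \<in> {a..b}" for x :: real
    using assms(1) clamp_in_interval[of a b x] by simp
  have clamp_id: "x \<in> {a..b} \<Longrightarrow> clamp a b x = x" for x :: real
    using clamp_cancel_cbox[of x a b] by simp
  have "\<forall>f :: real \<Rightarrow>\<^sub>C real. \<exists>Tf :: real \<Rightarrow>\<^sub>C real. \<forall>x. Tf x = T f (clamp a b x)"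
  proof
    fix f :: "real \<Rightarrow>\<^sub>C real"
    have "continuous_on (cbox a b) (T f)"
      using T_cont[of f] by simp
    then show "\<exists>Tf :: real \<Rightarrow>\<^sub>C real. \<forall>x. Tf x = T f (clamp a b x)"
      by (rule continuous_on_cbox_bcontfunE) blast
  qed
  then obtain \<Phi> :: "(real \<Rightarrow>\<^sub>C real) \<Rightarrow> (real \<Rightarrow>\<^sub>C real)"
    where \<Phi>: "\<And>f x. \<Phi> f x = T f (clamp a b x)"
    by (auto dest!: choice)
  have "dist (\<Phi> f) (\<Phi> g) \<le> c * dist f g" for f g
  proof (rule dist_bound)
    fix x
    have "\<forall>z\<in>{a..b}. \<bar>f z - g z\<bar> \<le> dist f g"
      using dist_bounded[of f _ g] by (simp add: dist_real_def)
    then show "dist (\<Phi> f x) (\<Phi> g x) \<le> c * dist f g"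
      unfolding \<Phi> dist_real_def using T_lipschitz clamp_in by simp
  qed
  then obtain g where g: "\<Phi> g = g" and g_unique: "\<And>h. \<Phi> h = h \<Longrightarrow> h = g"
    using banach_fix_type[of c \<Phi>] assms(2,3) by blast
  have "h u = g u"
    if h: "continuous_on {a..b} h" "\<forall>u\<in>{a..b}. T h u = h u" and u: "u \<in> {a..b}" for h u
  proof -
    have "continuous_on (cbox a b) h"
      using h(1) by simp
    then obtain h' :: "real \<Rightarrow>\<^sub>C real"
      where h'_eq: "\<And>x. x \<in> cbox a b \<Longrightarrow> h' x = h x" and h'_clamp: "\<And>x. h' x = h (clamp a b x)"
      by (rule continuous_on_cbox_bcontfunE) blast
    \<comment> \<open>\<open>T h\<close> depends only on \<open>h\<close> on \<open>[a, b]\<close>: take \<open>D = 0\<close> in the Lipschitz bound.\<close>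
    have "T h' v = h v" if "v \<in> {a..b}" for v
      using T_lipschitz[of h' h 0 v] h h'_eq that by simp
    then have "\<Phi> h' x = h' x" for x
      using \<Phi> h'_clamp clamp_in by simp
    then have "\<Phi> h' = h'"
      by (rule bcontfun_eqI)
    then show ?thesis using g_unique h'_eq u by auto
  qed
  moreover have "T g u = g u" if "u \<in> {a..b}" for u
    using \<Phi>[of g u] g clamp_id[OF that] by simp
  ultimately show ?thesis by (intro exI[of _ "apply_bcontfun g"]) auto
qed

locale volterra_ie =
  fixes F :: "real \<Rightarrow> real" and \<gamma> \<alpha> \<mu> :: real
  assumes alpha_pos: "0 < \<alpha>" and mu_pos: "0 < \<mu>"
    and F_mono: "mono F" and F_nonneg: "\<And>x. 0 \<le> F x" and F_le_1: "\<And>x. F x \<le> 1"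
    and F_at_right_0: "(F \<longlongrightarrow> 0) (at_right 0)"
begin

definition w :: "real \<Rightarrow> real" where
  "w t = t powr (\<gamma> - 2) * exp (- \<alpha> / t)"

definition W :: "real \<Rightarrow> real" where
  "W t = t powr \<gamma> * exp (- \<alpha> / t)"

lemma w_nonneg: "0 \<le> w t"
  by (simp add: w_def)

lemma W_pos: "0 < t \<Longrightarrow> 0 < W t"
  by (simp add: W_def)

lemma continuous_on_w: "continuous_on {0..u} w"
proof (rule continuous_on_Icc_0I)
  show "continuous_on {0<..u} w"
    unfolding w_def[abs_def] by (intro continuous_intros) auto
  have "((\<lambda>t. t powr (\<gamma> - 2) * exp (- \<alpha> / t)) \<longlongrightarrow> 0) (at_right 0)"
    using alpha_pos by real_asymp
  then show "(w \<longlongrightarrow> w 0) (at_right 0)"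
    by (simp add: w_def[abs_def])
qed

lemma continuous_on_W: "continuous_on {0..u} W"
proof (rule continuous_on_Icc_0I)
  show "continuous_on {0<..u} W"
    unfolding W_def[abs_def] by (intro continuous_intros) auto
  have "((\<lambda>t. t powr \<gamma> * exp (- \<alpha> / t)) \<longlongrightarrow> 0) (at_right 0)"
    using alpha_pos by real_asymp
  then show "(W \<longlongrightarrow> W 0) (at_right 0)"
    by (simp add: W_def[abs_def])
qed

lemma W_has_real_derivative:
  assumes "0 < x"
  shows "(W has_real_derivative w x * (\<alpha> + \<gamma> * x)) (at x)"
proof -
  have "(W has_real_derivative
          \<gamma> * x powr (\<gamma> - 1) * exp (- \<alpha> / x) + x powr \<gamma> * (exp (- \<alpha> / x) * (\<alpha> / x\<^sup>2))) (at x)"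
    unfolding W_def[abs_def] using assms
    by (auto intro!: derivative_eq_intros simp: field_simps power2_eq_square)
  moreover have "x powr \<gamma> = x powr (\<gamma> - 2) * x\<^sup>2" "x powr (\<gamma> - 1) = x powr (\<gamma> - 2) * x"
    using assms by (simp_all add: powr_diff field_simps power2_eq_square)
  ultimately show ?thesis
    using assms by (simp add: w_def field_simps power2_eq_square)
qed

lemma has_integral_W:
  assumes "0 \<le> u"
  shows "((\<lambda>t. w t * (\<alpha> + \<gamma> * t)) has_integral W u) {0..u}"
proof -
  have "((\<lambda>t. w t * (\<alpha> + \<gamma> * t)) has_integral W u - W 0) {0..u}"
    using assms continuous_on_W W_has_real_derivative
    by (intro fundamental_theorem_of_calculus_interior)
      (auto simp: has_real_derivative_iff_has_vector_derivative[symmetric])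
  then show ?thesis by (simp add: W_def)
qed

lemma integrable_w_mult:
  "continuous_on {0..u} h \<Longrightarrow> (\<lambda>t. w t * h t) integrable_on {0..u}"
  by (intro integrable_continuous_interval continuous_intros continuous_on_w)

definition radius :: real where
  "radius = min (\<alpha> / (2 * (\<bar>\<gamma>\<bar> + 1))) (\<alpha> / (4 * \<mu>))"

lemma radius_pos: "0 < radius"
  using alpha_pos mu_pos by (simp add: radius_def)

lemma radius_contraction: "2 * \<mu> / \<alpha> * radius \<le> 1 / 2"
proof -
  have "2 * \<mu> / \<alpha> * radius \<le> 2 * \<mu> / \<alpha> * (\<alpha> / (4 * \<mu>))"
    using alpha_pos mu_pos by (intro mult_left_mono) (auto simp: radius_def)
  also have "\<dots> = 1 / 2"
    using alpha_pos mu_pos by simp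
  finally show ?thesis .
qed

lemma half_alpha_le:
  assumes "0 \<le> t" "t \<le> radius"
  shows "\<alpha> / 2 \<le> \<alpha> + \<gamma> * t"
proof -
  have "\<bar>\<gamma> * t\<bar> \<le> (\<bar>\<gamma>\<bar> + 1) * t"
    using assms by (simp add: abs_mult mult_right_mono)
  also have "\<dots> \<le> (\<bar>\<gamma>\<bar> + 1) * (\<alpha> / (2 * (\<bar>\<gamma>\<bar> + 1)))"
    using assms by (intro mult_left_mono) (auto simp: radius_def)
  also have "\<dots> = \<alpha> / 2"
    using abs_ge_zero[of \<gamma>] by (simp add: field_simps)
  finally show ?thesis by linarith
qed

lemma integral_w_le:
  assumes "0 \<le> u" "u \<le> radius"
  shows "integral {0..u} w \<le> 2 / \<alpha> * W u"
proof (rule has_integral_le)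
  show "(w has_integral integral {0..u} w) {0..u}"
    using integrable_w_mult[of u "\<lambda>_. 1"] by (auto intro: integrable_integral)
  show "((\<lambda>t. 2 / \<alpha> * (w t * (\<alpha> + \<gamma> * t))) has_integral 2 / \<alpha> * W u) {0..u}"
    using has_integral_W[OF assms(1)] by (rule has_integral_mult_right)
  show "w t \<le> 2 / \<alpha> * (w t * (\<alpha> + \<gamma> * t))" if "t \<in> {0..u}" for t
  proof -
    have "w t * (\<alpha> / 2) \<le> w t * (\<alpha> + \<gamma> * t)"
      using half_alpha_le[of t] that assms w_nonneg by (intro mult_left_mono) auto
    then show ?thesis using alpha_pos by (simp add: field_simps)
  qed
qed

lemma abs_mu_div_W_integral_le:
  assumes "0 < u" "u \<le> radius" "h integrable_on {0..u}"
    and "\<And>t. t \<in> {0..u} \<Longrightarrow> \<bar>h t\<bar> \<le> w t * K" and "0 \<le> K"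
  shows "\<bar>\<mu> / W u * integral {0..u} h\<bar> \<le> 2 * \<mu> / \<alpha> * K"
proof -
  have "norm (integral {0..u} h) \<le> integral {0..u} (\<lambda>t. w t * K)"
    using assms(3,4) integrable_w_mult[of u "\<lambda>_. K"] by (intro integral_norm_bound_integral) auto
  then have "\<bar>integral {0..u} h\<bar> \<le> K * integral {0..u} w"
    by (simp add: mult.commute)
  also have "\<dots> \<le> K * (2 / \<alpha> * W u)"
    using integral_w_le assms by (intro mult_left_mono) auto
  finally have "\<mu> / W u * \<bar>integral {0..u} h\<bar> \<le> \<mu> / W u * (K * (2 / \<alpha> * W u))"
    using mu_pos W_pos[OF assms(1)] by (intro mult_left_mono) auto
  also have "\<dots> = 2 * \<mu> / \<alpha> * K"
    using W_pos[OF assms(1)] by (simp add: field_simps)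
  finally show ?thesis
    using mu_pos W_pos[OF assms(1)] by (simp add: abs_mult)
qed

definition survival_conv :: "(real \<Rightarrow> real) \<Rightarrow> real \<Rightarrow> real" where
  "survival_conv f t = integral {0..t} (\<lambda>z. f z * (1 - F (t - z)))"

lemma F_borel_measurable: "F \<in> borel_measurable borel"
  using F_mono by (rule borel_measurable_mono)

lemma abs_mult_survival_le: "\<bar>x * (1 - F y)\<bar> \<le> \<bar>x\<bar>"
  using F_nonneg[of y] F_le_1[of y] by (simp add: abs_mult mult_left_le)

lemma survival_conv_integrable:
  assumes "continuous_on {0..t} f"
  shows "(\<lambda>z. f z * (1 - F (t - z))) integrable_on {0..t}"
proof -
  obtain B where B: "\<And>z. z \<in> {0..t} \<Longrightarrow> \<bar>f z\<bar> \<le> B"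
    using continuous_on_compact_bound[OF compact_Icc assms] by (metis real_norm_def)
  show ?thesis
  proof (rule measurable_bounded_by_integrable_imp_integrable_real)
    show "(\<lambda>z. f z * (1 - F (t - z))) \<in> borel_measurable (lebesgue_on {0..t})"
      using continuous_imp_measurable_on_sets_lebesgue[OF assms]
        borel_measurable_lebesgue_onI[of "\<lambda>z. 1 - F (t - z)"] F_borel_measurable
      by (intro borel_measurable_times) auto
    show "\<bar>f z * (1 - F (t - z))\<bar> \<le> B" if "z \<in> {0..t}" for z
      using abs_mult_survival_le B[OF that] by (rule order_trans)
  qed auto
qed

lemma abs_survival_conv_le:
  assumes "continuous_on {0..u} f" "\<forall>z\<in>{0..u}. \<bar>f z\<bar> \<le> B" "t \<in> {0..u}"
  shows "\<bar>survival_conv f t\<bar> \<le> B * u"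
proof -
  have "continuous_on {0..t} f"
    using assms(3) by (intro continuous_on_subset[OF assms(1)]) auto
  moreover have "norm (f z * (1 - F (t - z))) \<le> B" if "z \<in> {0..t}" for z
    using abs_mult_survival_le[of "f z" "t - z"] assms(2,3) that by force
  ultimately have "norm (survival_conv f t) \<le> integral {0..t} (\<lambda>_. B)"
    unfolding survival_conv_def by (intro integral_norm_bound_integral survival_conv_integrable) auto
  also have "\<dots> \<le> B * u"
    using assms(2,3) order_trans[OF abs_ge_zero, of "f 0" B] by (simp add: mult.commute mult_left_mono)
  finally show ?thesis
    by simp
qed

lemma survival_conv_diff:
  assumes "continuous_on {0..t} f" "continuous_on {0..t} g"
  shows "survival_conv f t - survival_conv g t = survival_conv (\<lambda>z. f z - g z) t"
  unfolding survival_conv_def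
  using integral_diff[OF survival_conv_integrable[OF assms(1)] survival_conv_integrable[OF assms(2)]]
  by (simp add: algebra_simps)

lemma integral_survival_eq_set_lebesgue_integral:
  fixes G :: "real \<Rightarrow>\<^sub>C real"
  assumes "0 \<le> t"
  shows "integral {0..t} (\<lambda>z. G z * (1 - F (t - z))) = (LINT z : {0..t} | lborel. G z * (1 - F (t - z)))"
proof (rule set_borel_integral_eq_integral(2)[symmetric])
  show "set_integrable lborel {0..t} (\<lambda>z. G z * (1 - F (t - z)))"
    unfolding set_integrable_def
  proof (rule integrableI_bounded_set_indicator[where B="norm G"])
    show "(\<lambda>z. G z * (1 - F (t - z))) \<in> borel_measurable lborel"
      using borel_measurable_apply_bcontfun[of G] F_borel_measurable by measurable
    have "norm (G z * (1 - F (t - z))) \<le> norm G" for z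
      using abs_mult_survival_le[of "G z" "t - z"] norm_bounded[of G z] by simp
    then show "AE z\<in>{0..t} in lborel. norm (G z * (1 - F (t - z))) \<le> norm G"
      by (intro AE_I2) simp
    show "emeasure lborel {0..t} < \<infinity>"
      using assms by simp
  qed simp
qed

text \<open>Measurability in \<open>t\<close> comes from writing the integral as a parametric Lebesgue integral
  of a jointly measurable function.\<close>

lemma survival_conv_measurable:
  assumes "continuous_on {0..b} f"
  obtains L where "L \<in> borel_measurable borel" "\<And>t. t \<in> {0..b} \<Longrightarrow> survival_conv f t = L t"
proof -
  obtain G :: "real \<Rightarrow>\<^sub>C real" where G: "\<And>z. z \<in> {0..b} \<Longrightarrow> G z = f z"
    using continuous_on_cbox_bcontfunE[of 0 b f] assms by (metis cbox_interval)
  define L where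
    "L t = (\<integral>z. (if 0 \<le> z \<and> z \<le> t then G z * (1 - F (t - z)) else 0) \<partial>lborel)" for t
  have "(\<lambda>(t, z). if 0 \<le> z \<and> z \<le> t then G z * (1 - F (t - z)) else 0)
          \<in> borel_measurable (borel \<Otimes>\<^sub>M lborel)"
    using borel_measurable_apply_bcontfun[of G] F_borel_measurable by measurable
  then have "L \<in> borel_measurable borel"
    unfolding L_def by (rule lborel.borel_measurable_lebesgue_integral)
  moreover have "survival_conv f t = L t" if t: "t \<in> {0..b}" for t
  proof -
    have "survival_conv f t = integral {0..t} (\<lambda>z. G z * (1 - F (t - z)))"
      unfolding survival_conv_def using t G by (intro integral_cong) auto
    also have "\<dots> = (LINT z : {0..t} | lborel. G z * (1 - F (t - z)))"
      using t by (intro integral_survival_eq_set_lebesgue_integral) simp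
    also have "\<dots> = L t"
      unfolding L_def set_lebesgue_integral_def
      by (intro Bochner_Integration.integral_cong) (auto simp: indicator_def)
    finally show ?thesis .
  qed
  ultimately show ?thesis
    using that by blast
qed

definition integrand :: "real \<Rightarrow> (real \<Rightarrow> real) \<Rightarrow> real \<Rightarrow> real" where
  "integrand p f t = w t * (p * (1 - F t) + survival_conv f t)"

definition rhs :: "real \<Rightarrow> (real \<Rightarrow> real) \<Rightarrow> real \<Rightarrow> real" where
  "rhs p f u = \<mu> / W u * integral {0..u} (integrand p f)"

lemma solves_ie_iff:
  "solves_ie F \<gamma> \<alpha> \<mu> p u0 g \<longleftrightarrow>
     (\<forall>u\<in>{0<..u0}. integrand p g integrable_on {0..u} \<and> g u = rhs p g u)"
  unfolding solves_ie_def integrand_def[abs_def] survival_conv_def w_def rhs_def W_def ..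

lemma w_borel_measurable: "w \<in> borel_measurable borel"
proof -
  have "(\<lambda>t::real. exp (- \<alpha> / t)) \<in> borel_measurable borel"
    by measurable
  then show ?thesis
    unfolding w_def[abs_def] by measurable
qed

lemma integrand_integrable:
  assumes "continuous_on {0..u} f"
  shows "integrand p f integrable_on {0..u}"
proof -
  obtain L where L: "L \<in> borel_measurable borel" "\<And>t. t \<in> {0..u} \<Longrightarrow> survival_conv f t = L t"
    using survival_conv_measurable[OF assms] by blast
  obtain B where B: "\<forall>z\<in>{0..u}. \<bar>f z\<bar> \<le> B"
    using continuous_on_compact_bound[OF compact_Icc assms] by (metis real_norm_def)
  show ?thesis
  proof (rule measurable_bounded_by_integrable_imp_integrable_real)
    have "(\<lambda>t. w t * (p * (1 - F t) + L t)) \<in> borel_measurable borel"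
      using w_borel_measurable F_borel_measurable L(1) by measurable
    then have "(\<lambda>t. w t * (p * (1 - F t) + L t)) \<in> borel_measurable (lebesgue_on {0..u})"
      by (rule borel_measurable_lebesgue_onI)
    then show "integrand p f \<in> borel_measurable (lebesgue_on {0..u})"
      by (rule measurable_lebesgue_cong[THEN iffD1, rotated]) (simp add: integrand_def L(2))
    show "(\<lambda>t. w t * (\<bar>p\<bar> + B * u)) integrable_on {0..u}"
      using integrable_w_mult[of u "\<lambda>_. \<bar>p\<bar> + B * u"] by simp
    show "\<bar>integrand p f t\<bar> \<le> w t * (\<bar>p\<bar> + B * u)" if t: "t \<in> {0..u}" for t
    proof -
      have "\<bar>p * (1 - F t) + survival_conv f t\<bar> \<le> \<bar>p\<bar> + B * u"
        using abs_survival_conv_le[OF assms B t] abs_mult_survival_le[of p t] by linarith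
      then show ?thesis
        unfolding integrand_def using w_nonneg[of t] by (simp add: abs_mult mult_left_mono)
    qed
  qed auto
qed

lemma abs_rhs_minus_limit_le:
  assumes "continuous_on {0..u} f" "\<forall>z\<in>{0..u}. \<bar>f z\<bar> \<le> B" "0 \<le> p" "0 < u" "u \<le> radius"
  shows "\<bar>rhs p f u - \<mu> * p / \<alpha>\<bar> \<le> 2 * \<mu> / \<alpha> * (p * F u + B * u + p * \<bar>\<gamma>\<bar> * u / \<alpha>)"
proof -
  define h where "h = (\<lambda>t. integrand p f t - p / \<alpha> * (w t * (\<alpha> + \<gamma> * t)))"
  have h_int: "(h has_integral integral {0..u} (integrand p f) - p / \<alpha> * W u) {0..u}"
    unfolding h_def using assms(1,4)
    by (intro has_integral_diff has_integral_mult_right has_integral_W integrable_integral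
        integrand_integrable) auto
  have "rhs p f u - \<mu> * p / \<alpha> = \<mu> / W u * (integral {0..u} (integrand p f) - p / \<alpha> * W u)"
    using W_pos[OF assms(4)] alpha_pos by (simp add: rhs_def field_simps)
  also have "\<dots> = \<mu> / W u * integral {0..u} h"
    using h_int by (simp add: integral_unique)
  also have "\<bar>\<dots>\<bar> \<le> 2 * \<mu> / \<alpha> * (p * F u + B * u + p * \<bar>\<gamma>\<bar> * u / \<alpha>)"
  proof (rule abs_mu_div_W_integral_le)
    show "h integrable_on {0..u}"
      using h_int by blast
    show "0 \<le> p * F u + B * u + p * \<bar>\<gamma>\<bar> * u / \<alpha>"
      using assms F_nonneg[of u] alpha_pos order_trans[OF abs_ge_zero, of "f 0" B] by simp
    show "\<bar>h t\<bar> \<le> w t * (p * F u + B * u + p * \<bar>\<gamma>\<bar> * u / \<alpha>)" if t: "t \<in> {0..u}" for t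
    proof -
      have h_eq: "h t = w t * (survival_conv f t - p * F t - p * \<gamma> * t / \<alpha>)"
        unfolding h_def integrand_def using alpha_pos by (simp add: field_simps)
      have "\<bar>survival_conv f t\<bar> \<le> B * u"
        using assms(1,2) t by (rule abs_survival_conv_le)
      moreover have "0 \<le> p * F t" "p * F t \<le> p * F u"
        using t assms(3) F_nonneg F_mono by (auto intro: mult_left_mono simp: mono_def)
      moreover have "\<bar>p * \<gamma> * t / \<alpha>\<bar> \<le> p * \<bar>\<gamma>\<bar> * u / \<alpha>"
        using t assms(3) alpha_pos
        by (simp add: abs_mult divide_right_mono mult_left_mono)
      ultimately have "\<bar>survival_conv f t - p * F t - p * \<gamma> * t / \<alpha>\<bar>
          \<le> p * F u + B * u + p * \<bar>\<gamma>\<bar> * u / \<alpha>"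
        by arith
      then show ?thesis
        unfolding h_eq using w_nonneg[of t] by (simp add: abs_mult mult_left_mono)
    qed
  qed (use assms in auto)
  finally show ?thesis .
qed

lemma rhs_tendsto:
  assumes "0 < b" "continuous_on {0..b} f" "0 \<le> p"
  shows "(rhs p f \<longlongrightarrow> \<mu> * p / \<alpha>) (at_right 0)"
proof -
  obtain B where B: "\<And>z. z \<in> {0..b} \<Longrightarrow> \<bar>f z\<bar> \<le> B"
    using continuous_on_compact_bound[OF compact_Icc assms(2)] by (metis real_norm_def)
  define E where "E = (\<lambda>u. 2 * \<mu> / \<alpha> * (p * F u + B * u + p * \<bar>\<gamma>\<bar> * u / \<alpha>))"
  have "\<forall>\<^sub>F u in at_right 0. norm (rhs p f u - \<mu> * p / \<alpha>) \<le> E u"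
    unfolding eventually_at_right_field
  proof (intro exI[of _ "min b radius"] conjI allI impI)
    show "0 < min b radius"
      using assms(1) radius_pos by simp
    fix u :: real
    assume "0 < u" "u < min b radius"
    then show "norm (rhs p f u - \<mu> * p / \<alpha>) \<le> E u"
      unfolding E_def real_norm_def using B assms(3)
      by (intro abs_rhs_minus_limit_le continuous_on_subset[OF assms(2)]) auto
  qed
  moreover have "(E \<longlongrightarrow> 2 * \<mu> / \<alpha> * (p * 0 + B * 0 + p * \<bar>\<gamma>\<bar> * 0 / \<alpha>)) (at_right 0)"
    unfolding E_def using alpha_pos by (intro tendsto_intros F_at_right_0) auto
  then have "(E \<longlongrightarrow> 0) (at_right 0)"
    by simp
  ultimately have "((\<lambda>u. rhs p f u - \<mu> * p / \<alpha>) \<longlongrightarrow> 0) (at_right 0)"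
    by (rule Lim_null_comparison)
  then show ?thesis
    by (simp add: LIM_zero_iff)
qed

lemma rhs_lipschitz:
  assumes "continuous_on {0..u} f" "continuous_on {0..u} g" "\<forall>z\<in>{0..u}. \<bar>f z - g z\<bar> \<le> D"
    and "0 < u" "u \<le> radius"
  shows "\<bar>rhs p f u - rhs p g u\<bar> \<le> 2 * \<mu> / \<alpha> * u * D"
proof -
  have D: "0 \<le> D"
    using assms(3,4) order_trans[OF abs_ge_zero, of "f 0 - g 0" D] by simp
  have "rhs p f u - rhs p g u = \<mu> / W u * integral {0..u} (\<lambda>t. integrand p f t - integrand p g t)"
    using integral_diff[OF integrand_integrable[OF assms(1)] integrand_integrable[OF assms(2)]]
    by (simp add: rhs_def right_diff_distrib)
  also have "\<bar>\<dots>\<bar> \<le> 2 * \<mu> / \<alpha> * (D * u)"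
  proof (rule abs_mu_div_W_integral_le)
    show "(\<lambda>t. integrand p f t - integrand p g t) integrable_on {0..u}"
      by (intro integrable_diff integrand_integrable assms(1,2))
    show "\<bar>integrand p f t - integrand p g t\<bar> \<le> w t * (D * u)" if t: "t \<in> {0..u}" for t
    proof -
      have cont: "continuous_on {0..t} f" "continuous_on {0..t} g"
        using t by (auto intro: continuous_on_subset[OF assms(1)] continuous_on_subset[OF assms(2)])
      have "integrand p f t - integrand p g t = w t * (survival_conv f t - survival_conv g t)"
        by (simp add: integrand_def algebra_simps)
      also have "\<dots> = w t * survival_conv (\<lambda>z. f z - g z) t"
        using survival_conv_diff[OF cont] by simp
      finally have "\<bar>integrand p f t - integrand p g t\<bar> = w t * \<bar>survival_conv (\<lambda>z. f z - g z) t\<bar>"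
        using w_nonneg[of t] by (simp add: abs_mult)
      also have "\<dots> \<le> w t * (D * u)"
        using t assms(1-3) w_nonneg
        by (intro mult_left_mono abs_survival_conv_le continuous_on_diff) auto
      finally show ?thesis .
    qed
  qed (use assms D in auto)
  finally show ?thesis
    by (simp add: mult_ac)
qed

lemma continuous_on_rhs:
  assumes "continuous_on {0..b} f"
  shows "continuous_on {0<..b} (rhs p f)"
proof -
  have "continuous_on {0..b} (\<lambda>u. integral {0..u} (integrand p f))"
    using integrand_integrable[OF assms] by (rule indefinite_integral_continuous_1)
  then have "continuous_on {0<..b} (\<lambda>u. integral {0..u} (integrand p f))"
    by (rule continuous_on_subset) auto
  moreover have "continuous_on {0<..b} W"
    using continuous_on_W by (rule continuous_on_subset) auto
  moreover have "\<forall>x\<in>{0<..b}. W x \<noteq> 0"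
    using W_pos by (metis greaterThanAtMost_iff less_irrefl)
  ultimately show ?thesis
    unfolding rhs_def[abs_def] by (intro continuous_intros) auto
qed

definition rhs_ext :: "real \<Rightarrow> (real \<Rightarrow> real) \<Rightarrow> real \<Rightarrow> real" where
  "rhs_ext p f u = (if u = 0 then \<mu> * p / \<alpha> else rhs p f u)"

lemma continuous_on_rhs_ext:
  assumes "0 < b" "continuous_on {0..b} f" "0 \<le> p"
  shows "continuous_on {0..b} (rhs_ext p f)"
proof (rule continuous_on_Icc_0I)
  show "continuous_on {0<..b} (rhs_ext p f)"
    by (rule continuous_on_eq[OF continuous_on_rhs[OF assms(2)]]) (simp add: rhs_ext_def)
  have "\<forall>\<^sub>F u in at_right 0. rhs p f u = rhs_ext p f u"
    unfolding eventually_at_right_field by (intro exI[of _ 1]) (simp add: rhs_ext_def)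
  with rhs_tendsto[OF assms] show "(rhs_ext p f \<longlongrightarrow> rhs_ext p f 0) (at_right 0)"
    by (simp add: Lim_transform_eventually rhs_ext_def)
qed

lemma rhs_ext_contraction:
  assumes "continuous_on {0..b} f" "continuous_on {0..b} g" "\<forall>z\<in>{0..b}. \<bar>f z - g z\<bar> \<le> D"
    and "b \<le> radius" "u \<in> {0..b}"
  shows "\<bar>rhs_ext p f u - rhs_ext p g u\<bar> \<le> 1 / 2 * D"
proof -
  have D: "0 \<le> D"
    using assms(3,5) order_trans[OF abs_ge_zero, of "f 0 - g 0" D] by auto
  show ?thesis
  proof (cases "u = 0")
    case True
    then show ?thesis using D by (simp add: rhs_ext_def)
  next
    case False
    then have u: "0 < u" "u \<le> b"
      using assms(5) by auto
    have "\<bar>rhs p f u - rhs p g u\<bar> \<le> 2 * \<mu> / \<alpha> * u * D"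
      using u assms by (intro rhs_lipschitz continuous_on_subset[OF assms(1)]
          continuous_on_subset[OF assms(2)]) auto
    also have "\<dots> \<le> 2 * \<mu> / \<alpha> * radius * D"
      using u assms(4) D alpha_pos mu_pos by (intro mult_right_mono mult_left_mono) auto
    also have "\<dots> \<le> 1 / 2 * D"
      using radius_contraction D by (rule mult_right_mono)
    finally show ?thesis
      using False by (simp add: rhs_ext_def)
  qed
qed

lemma solves_ie_iff_fixed_point:
  assumes "0 < b" "continuous_on {0..b} g" "0 \<le> p"
  shows "solves_ie F \<gamma> \<alpha> \<mu> p b g \<longleftrightarrow> (\<forall>u\<in>{0..b}. rhs_ext p g u = g u)"
proof
  assume "solves_ie F \<gamma> \<alpha> \<mu> p b g"
  then have eq: "\<forall>u\<in>{0<..b}. rhs p g u = g u"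
    by (simp add: solves_ie_iff)
  have "g 0 = \<mu> * p / \<alpha>"
  proof (rule tendsto_unique[OF trivial_limit_at_right_real])
    show "(g \<longlongrightarrow> g 0) (at_right 0)"
      using assms(1,2) by (rule continuous_on_Icc_at_rightD[rotated])
    have "\<forall>\<^sub>F u in at_right 0. rhs p g u = g u"
      unfolding eventually_at_right_field using assms(1) eq by (intro exI[of _ b]) auto
    with rhs_tendsto[OF assms] show "(g \<longlongrightarrow> \<mu> * p / \<alpha>) (at_right 0)"
      by (rule Lim_transform_eventually)
  qed
  with eq show "\<forall>u\<in>{0..b}. rhs_ext p g u = g u"
    by (auto simp: rhs_ext_def)
next
  assume fixed: "\<forall>u\<in>{0..b}. rhs_ext p g u = g u"
  have "integrand p g integrable_on {0..u} \<and> g u = rhs p g u" if "u \<in> {0<..b}" for u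
    using that fixed[rule_format, of u]
    by (auto simp: rhs_ext_def intro!: integrand_integrable continuous_on_subset[OF assms(2)])
  then show "solves_ie F \<gamma> \<alpha> \<mu> p b g"
    by (simp add: solves_ie_iff)
qed

theorem unique_continuous_solution:
  assumes "0 \<le> p"
  shows "\<exists>g. continuous_on {0..radius} g \<and> solves_ie F \<gamma> \<alpha> \<mu> p radius g \<and>
           (\<forall>h. continuous_on {0..radius} h \<and> solves_ie F \<gamma> \<alpha> \<mu> p radius h
                 \<longrightarrow> (\<forall>u\<in>{0..radius}. h u = g u)) \<and>
           g 0 = \<mu> * p / \<alpha>"
proof -
  note solves_iff = solves_ie_iff_fixed_point[OF radius_pos _ assms]
  have "\<exists>g. continuous_on {0..radius} g \<and> (\<forall>u\<in>{0..radius}. rhs_ext p g u = g u) \<and>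
          (\<forall>h. continuous_on {0..radius} h \<and> (\<forall>u\<in>{0..radius}. rhs_ext p h u = h u)
                \<longrightarrow> (\<forall>u\<in>{0..radius}. h u = g u))"
    using radius_pos assms
    by (intro ex_unique_continuous_fixed_point_Icc[where c = "1 / 2"]
        continuous_on_rhs_ext rhs_ext_contraction) auto
  then obtain g where g: "continuous_on {0..radius} g" "\<forall>u\<in>{0..radius}. rhs_ext p g u = g u"
    and unique: "\<And>h. continuous_on {0..radius} h \<Longrightarrow> \<forall>u\<in>{0..radius}. rhs_ext p h u = h u \<Longrightarrow>
          \<forall>u\<in>{0..radius}. h u = g u"
    by blast
  have "g 0 = \<mu> * p / \<alpha>"
    using g(2)[rule_format, of 0] radius_pos by (simp add: rhs_ext_def)
  moreover have "solves_ie F \<gamma> \<alpha> \<mu> p radius g"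
    using g solves_iff by blast
  moreover have "\<forall>h. continuous_on {0..radius} h \<and> solves_ie F \<gamma> \<alpha> \<mu> p radius h
                 \<longrightarrow> (\<forall>u\<in>{0..radius}. h u = g u)"
    using unique solves_iff by blast
  ultimately show ?thesis
    using g(1) by blast
qed

end

theorem lemma1:
  fixes M :: "real measure" and F :: "real \<Rightarrow> real"
    and \<kappa> a r \<sigma> c lam \<gamma> \<alpha> \<mu> :: real
  assumes "real_distribution M" and "F = cdf M"
    and A1: "F 0 = 0"
    and "0 < \<kappa>" "\<kappa> \<le> 1" "0 \<le> r" "0 < \<sigma>" "0 < c" "0 < lam"
    and "\<gamma> = 2 * ((a - r) * \<kappa> + r) / (\<kappa>^2 * \<sigma>^2)"
    and "\<alpha> = 2 * c / (\<kappa>^2 * \<sigma>^2)"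
    and "\<mu> = 2 * lam / (\<kappa>^2 * \<sigma>^2)"
  shows "\<forall>p>0. \<exists>u0>0. \<exists>g.
           continuous_on {0..u0} g \<and> solves_ie F \<gamma> \<alpha> \<mu> p u0 g \<and>
           (\<forall>h. continuous_on {0..u0} h \<and> solves_ie F \<gamma> \<alpha> \<mu> p u0 h
                 \<longrightarrow> (\<forall>u\<in>{0..u0}. h u = g u)) \<and>
           g 0 = lam * p / c"
proof -
  interpret M: real_distribution M
    by (rule assms(1))
  have scale: "0 < \<kappa>^2 * \<sigma>^2"
    using assms(4,7) by simp
  interpret volterra_ie F \<gamma> \<alpha> \<mu>
  proof
    show "0 < \<alpha>" "0 < \<mu>"
      using assms(8,9,11,12) scale by simp_all
    show "mono F" "0 \<le> F x" "F x \<le> 1" for x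
      unfolding assms(2) using M.cdf_nondecreasing M.cdf_nonneg M.cdf_bounded_prob
      by (auto simp: mono_def)
    have "continuous (at_right 0) F"
      unfolding assms(2) by (rule M.cdf_is_right_cont)
    then show "(F \<longlongrightarrow> 0) (at_right 0)"
      using A1 by (simp add: continuous_within)
  qed
  have "lam * p / c = \<mu> * p / \<alpha>" for p
    unfolding assms(11,12) using assms(4,7,8) by (simp add: field_simps)
  then show ?thesis
    using unique_continuous_solution radius_pos less_imp_le by metis
qed

end
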